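(* Fix calibration values $E^1,\dots,E^n\in\mathbb{R}^d_+$ with $\hat\sigma_j>0$ for all $j$. For every $t\in\mathbb{R}^d_+$, \[ \hat\Phi^{\mathrm{gwc}}(t):=\max_{1\le j\le d}\ \sup_{z_j\ge 0}\frac{t_j-\hat\mu_j(z_j)}{\hat\sigma_j(z_j)} =\max_{1\le j\le d}\max\Big\{\frac{t_j-\hat\mu_j(0)}{\hat\sigma_j(0)},\ \frac{t_j-\hat\mu_j(z^*_j)}{\hat\sigma_j(z^*_j)},\ -\frac{1}{\sqrt{n+1}}\Big\}, \] where $z^*_j=\hat\mu_j-\frac{\hat\sigma_j^2}{t_j-\hat\mu_j}$ if $t_j\ne\hat\mu_j$ and $\hat\mu_j\ge \frac{\hat\sigma_j^2}{t_j-\hat\mu_j}$, and $z^*_j=0$ otherwise (including when $t_j=\hat\mu_j$).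
   Context: $n\ge2$, $d\ge1$ integers. Calibration statistics: $\hat\mu_j=\frac1n\sum_{i=1}^n E^i_j$ and $\hat\sigma_j=\sqrt{\frac1n\sum_{i=1}^n(E^i_j-\hat\mu_j)^2}$. For $z\ge0$ (a placeholder for the unknown test residual coordinate), $\hat\mu_j(z)=\frac{\sum_{i=1}^nE^i_j+z}{n+1}$ and $\hat\sigma_j(z)=\sqrt{\frac{\sum_{i=1}^n(E^i_j-\hat\mu_j(z))^2+(z-\hat\mu_j(z))^2}{n}}$. *)

theory Defs
  imports Complex_Main
begin

(* Calibration residuals: E i j is the j-th coordinate of E^i, for i in {1..n}, j in {1..d}. *)

definition mu_hat :: "nat \<Rightarrow> (nat \<Rightarrow> nat \<Rightarrow> real) \<Rightarrow> nat \<Rightarrow> real" where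
  "mu_hat n E j = (\<Sum>i=1..n. E i j) / real n"

definition sigma_hat :: "nat \<Rightarrow> (nat \<Rightarrow> nat \<Rightarrow> real) \<Rightarrow> nat \<Rightarrow> real" where
  "sigma_hat n E j = sqrt ((\<Sum>i=1..n. (E i j - mu_hat n E j)^2) / real n)"

definition mu_z :: "nat \<Rightarrow> (nat \<Rightarrow> nat \<Rightarrow> real) \<Rightarrow> nat \<Rightarrow> real \<Rightarrow> real" where
  "mu_z n E j z = ((\<Sum>i=1..n. E i j) + z) / real (n + 1)"

definition sigma_z :: "nat \<Rightarrow> (nat \<Rightarrow> nat \<Rightarrow> real) \<Rightarrow> nat \<Rightarrow> real \<Rightarrow> real" where
  "sigma_z n E j z = sqrt (((\<Sum>i=1..n. (E i j - mu_z n E j z)^2) + (z - mu_z n E j z)^2) / real n)"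

definition score :: "nat \<Rightarrow> (nat \<Rightarrow> nat \<Rightarrow> real) \<Rightarrow> nat \<Rightarrow> real \<Rightarrow> real \<Rightarrow> real" where
  "score n E j tj z = (tj - mu_z n E j z) / sigma_z n E j z"

definition z_star :: "nat \<Rightarrow> (nat \<Rightarrow> nat \<Rightarrow> real) \<Rightarrow> nat \<Rightarrow> real \<Rightarrow> real" where
  "z_star n E j tj =
     (if tj \<noteq> mu_hat n E j \<and> mu_hat n E j \<ge> (sigma_hat n E j)^2 / (tj - mu_hat n E j)
      then mu_hat n E j - (sigma_hat n E j)^2 / (tj - mu_hat n E j) else 0)"

definition Phi_gwc :: "nat \<Rightarrow> nat \<Rightarrow> (nat \<Rightarrow> nat \<Rightarrow> real) \<Rightarrow> (nat \<Rightarrow> real) \<Rightarrow> real" where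
  "Phi_gwc n d E t = Max ((\<lambda>j. SUP z\<in>{0::real..}. score n E j (t j) z) ` {1..d})"

end

theory Submission
  imports Defs
begin

text \<open>Substituting \<open>u = (z - \<mu>\<^sub>j) / sqrt (n + 1)\<close>, the variance update formula gives
  \<open>\<sigma>\<^sub>j(z)\<^sup>2 = \<sigma>\<^sub>j\<^sup>2 + u\<^sup>2\<close>, so the score becomes \<open>(a - c u) / sqrt (s\<^sup>2 + u\<^sup>2)\<close> with
  \<open>a = t\<^sub>j - \<mu>\<^sub>j\<close>, \<open>c = 1 / sqrt (n + 1)\<close>, \<open>s = \<sigma>\<^sub>j\<close>. Its derivative has the sign of
  \<open>-c s\<^sup>2 - a u\<close>, so the only stationary point is \<open>u = -c s\<^sup>2 / a\<close>, and it tends to \<open>-c\<close> as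
  \<open>u \<rightarrow> \<infinity>\<close>. Hence on the half-line \<open>z \<ge> 0\<close> the supremum is the value at \<open>z = 0\<close>, the value at
  the stationary point (if it lies on the half-line), or the limit \<open>-c\<close>; the point \<open>z\<^sup>*\<^sub>j\<close> is
  exactly the stationary point in the original variable.\<close>

definition profile :: "real \<Rightarrow> real \<Rightarrow> real \<Rightarrow> real \<Rightarrow> real" where
  "profile a c s u = (a - c*u) / sqrt (s^2 + u^2)"

text \<open>For \<open>a < 0\<close> the stationary point is a minimum; including it is harmless because beyond
  it the profile stays below \<open>-c\<close>.\<close>

definition profile_critical :: "real \<Rightarrow> real \<Rightarrow> real \<Rightarrow> real \<Rightarrow> real" where
  "profile_critical a c s u0 = (if a \<noteq> 0 \<and> u0 \<le> -c*s^2/a then -c*s^2/a else u0)"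

lemma has_real_derivative_profile:
  assumes "s > 0"
  shows "(profile a c s has_real_derivative (-c*s^2 - a*u) / ((s^2 + u^2) * sqrt (s^2 + u^2))) (at u)"
proof -
  have pos: "s^2 + u^2 > 0" using assms by (simp add: add_pos_nonneg)
  define r where "r = sqrt (s^2 + u^2)"
  have r: "r > 0" "r * r = s^2 + u^2"
    using pos by (simp_all add: r_def)
  have "((\<lambda>u. (a - c*u) / sqrt (s^2 + u^2)) has_real_derivative
          (- c * r - (a - c*u) * (inverse r / 2 * (2*u))) / r^2) (at u)"
    unfolding r_def using pos by (auto intro!: derivative_eq_intros)
  also have "- c * r - (a - c*u) * (inverse r / 2 * (2*u)) = (- c * (r * r) - (a - c*u) * u) / r"
    using r(1) by (simp add: field_simps)
  also have "\<dots> = (-c*s^2 - a*u) / r"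
    unfolding r(2) by (simp add: algebra_simps power2_eq_square)
  also have "(-c*s^2 - a*u) / r / r^2 = (-c*s^2 - a*u) / ((s^2 + u^2) * r)"
    by (simp add: power2_eq_square r(2) mult.commute)
  finally show ?thesis
    unfolding profile_def[abs_def] r_def .
qed

lemma profile_increasing:
  assumes "s > 0" "x \<le> y" "\<And>u. x \<le> u \<Longrightarrow> u \<le> y \<Longrightarrow> a*u \<le> -c*s^2"
  shows "profile a c s x \<le> profile a c s y"
proof (rule DERIV_nonneg_imp_nondecreasing[OF assms(2)])
  fix u assume "x \<le> u" "u \<le> y"
  then have "-c*s^2 - a*u \<ge> 0" using assms(3) by simp
  moreover have "(s^2 + u^2) * sqrt (s^2 + u^2) > 0" using assms(1) by (simp add: add_pos_nonneg)
  ultimately show "\<exists>D. DERIV (profile a c s) u :> D \<and> D \<ge> 0"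
    using has_real_derivative_profile[OF assms(1)] by (intro exI conjI) (auto intro: divide_nonneg_pos)
qed

lemma profile_decreasing:
  assumes "s > 0" "x \<le> y" "\<And>u. x \<le> u \<Longrightarrow> u \<le> y \<Longrightarrow> -c*s^2 \<le> a*u"
  shows "profile a c s y \<le> profile a c s x"
proof (rule DERIV_nonpos_imp_nonincreasing[OF assms(2)])
  fix u assume "x \<le> u" "u \<le> y"
  then have "-c*s^2 - a*u \<le> 0" using assms(3) by simp
  moreover have "(s^2 + u^2) * sqrt (s^2 + u^2) > 0" using assms(1) by (simp add: add_pos_nonneg)
  ultimately show "\<exists>D. DERIV (profile a c s) u :> D \<and> D \<le> 0"
    using has_real_derivative_profile[OF assms(1)] by (intro exI conjI) (auto intro: divide_nonpos_pos)
qed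

lemma profile_le_minus_slope:
  assumes "s > 0" "c > 0" "a < 0" "-c*s^2/a \<le> u"
  shows "profile a c s u \<le> -c"
proof -
  have "a*u \<le> a*(-c*s^2/a)" using assms(3,4) by (intro mult_left_mono_neg) auto
  then have au: "c*s^2 \<le> -a*u" using assms(3) by simp
  moreover have "c*s^2 > 0" using assms(1,2) by simp
  ultimately have "0 < (-a) * u" by linarith
  then have u: "u > 0" by (rule zero_less_mult_pos) (use assms(3) in simp)
  define r where "r = sqrt (s^2 + u^2)"
  have r: "r > 0" "r > u" "r^2 = s^2 + u^2"
    using assms unfolding r_def by (auto intro: real_less_rsqrt simp: add_pos_nonneg)
  have "(c*(r - u)) * (r + u) = c*s^2"
    using r(3) by (simp add: algebra_simps power2_eq_square)
  also have "\<dots> \<le> (-a) * u" using au by simp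
  also have "\<dots> \<le> (-a) * (r + u)" using assms(3) r by (intro mult_left_mono) auto
  finally have "c*(r - u) \<le> -a"
    by (rule mult_right_le_imp_le) (use r u in linarith)
  then have "a - c*u \<le> -c*r" by (simp add: algebra_simps)
  then show ?thesis
    unfolding profile_def r_def[symmetric] using r by (simp add: divide_le_eq)
qed

lemma tendsto_profile_at_top: "(profile a c s \<longlongrightarrow> -c) at_top"
proof -
  have "((\<lambda>u. (a * inverse u - c) / sqrt ((s * inverse u)^2 + 1))
          \<longlongrightarrow> (a * 0 - c) / sqrt ((s * 0)^2 + 1)) at_top"
    by (intro tendsto_intros tendsto_inverse_0_at_top filterlim_ident) simp
  moreover have "\<forall>\<^sub>F u in at_top. (a * inverse u - c) / sqrt ((s * inverse u)^2 + 1) = profile a c s u"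
    using eventually_gt_at_top[of 0]
  proof eventually_elim
    case (elim u)
    then have "sqrt ((s * inverse u)^2 + 1) = sqrt (s^2 + u^2) / u"
      by (simp add: field_simps real_sqrt_divide)
    then show ?case
      using elim by (simp add: profile_def field_simps)
  qed
  ultimately show ?thesis by (simp add: tendsto_cong)
qed

lemma profile_le_max:
  assumes s: "s > 0" and c: "c > 0" and u: "u0 \<le> u"
  shows "profile a c s u \<le> max (profile a c s u0) (max (profile a c s (profile_critical a c s u0)) (-c))"
proof (cases "a = 0")
  case True
  have "profile a c s u \<le> profile a c s u0"
    by (rule profile_decreasing[OF s u]) (use True s c in auto)
  then show ?thesis by auto
next
  case False
  define w where "w = -c*s^2/a"
  have aw: "a*w = -(c*s^2)" using False by (simp add: w_def)
  consider "a > 0" "u0 \<le> w" | "a > 0" "w < u0" | "a < 0" "u \<le> w" | "a < 0" "w < u"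
    using False by linarith
  then show ?thesis
  proof cases
    case 1
    have "profile a c s u \<le> profile a c s w"
    proof (cases "u \<le> w")
      case True
      show ?thesis
        by (rule profile_increasing[OF s True]) (use 1 in \<open>auto simp flip: aw intro: mult_left_mono\<close>)
    next
      case False
      show ?thesis
        by (rule profile_decreasing[OF s]) (use 1 False in \<open>auto simp flip: aw intro: mult_left_mono\<close>)
    qed
    then show ?thesis using 1 unfolding profile_critical_def w_def by auto
  next
    case 2
    have "profile a c s u \<le> profile a c s u0"
      by (rule profile_decreasing[OF s u]) (use 2 in \<open>auto simp flip: aw intro: mult_left_mono\<close>)
    then show ?thesis by auto
  next
    case 3
    have "profile a c s u \<le> profile a c s u0"
      by (rule profile_decreasing[OF s u]) (use 3 in \<open>auto simp flip: aw intro: mult_left_mono_neg\<close>)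
    then show ?thesis by auto
  next
    case 4
    then have "profile a c s u \<le> -c"
      using profile_le_minus_slope[OF s c] unfolding w_def by simp
    then show ?thesis by auto
  qed
qed

lemma SUP_profile:
  assumes s: "s > 0" and c: "c > 0"
  shows "(SUP u\<in>{u0..}. profile a c s u)
           = max (profile a c s u0) (max (profile a c s (profile_critical a c s u0)) (-c))"
    (is "?S = ?M")
proof (rule antisym)
  have ub: "\<And>u. u \<in> {u0..} \<Longrightarrow> profile a c s u \<le> ?M"
    using profile_le_max[OF s c] by simp
  then show "?S \<le> ?M" by (intro cSUP_least) auto
  have bdd: "bdd_above (profile a c s ` {u0..})"
    using ub by (intro bdd_aboveI2) auto
  have "profile_critical a c s u0 \<ge> u0"
    unfolding profile_critical_def by simp
  then have "profile a c s u0 \<le> ?S" "profile a c s (profile_critical a c s u0) \<le> ?S"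
    by (auto intro: cSUP_upper[OF _ bdd])
  moreover have "-c \<le> ?S"
  proof (rule tendsto_le[OF trivial_limit_at_top_linorder tendsto_const tendsto_profile_at_top])
    show "\<forall>\<^sub>F u in at_top. profile a c s u \<le> ?S"
      using eventually_ge_at_top[of u0] by eventually_elim (auto intro: cSUP_upper[OF _ bdd])
  qed
  ultimately show "?M \<le> ?S" by simp
qed

lemma image_affine_atLeast:
  fixes c mu :: real
  assumes c: "c > 0"
  shows "(\<lambda>z. (z - mu) * c) ` {0..} = {(0 - mu) * c..}"
proof (intro equalityI subsetI)
  fix u assume "u \<in> {(0 - mu) * c..}"
  then have "u = ((u/c + mu) - mu) * c" "u/c + mu \<ge> 0"
    using c by (auto simp: field_simps)
  then show "u \<in> (\<lambda>z. (z - mu) * c) ` {0..}" by (intro image_eqI) auto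
qed (use c in \<open>auto simp: algebra_simps\<close>)

lemma sum_power2_diff_shift:
  fixes x :: "'a \<Rightarrow> real"
  assumes "(\<Sum>i\<in>A. x i) = real (card A) * mu"
  shows "(\<Sum>i\<in>A. (x i - m)^2) = (\<Sum>i\<in>A. (x i - mu)^2) + real (card A) * (mu - m)^2"
proof -
  have "(\<Sum>i\<in>A. x i - mu) = 0" using assms by (simp add: sum_subtractf)
  moreover have "\<And>i. (x i - m)^2 = (x i - mu)^2 + 2*(mu - m)*(x i - mu) + (mu - m)^2"
    by (simp add: power2_eq_square algebra_simps)
  ultimately show ?thesis
    by (simp add: sum.distrib flip: sum_distrib_left)
qed

lemma sigma_z_eq_sigma_hat:
  assumes n: "n \<ge> 1"
  shows "sigma_z n E j z = sqrt ((sigma_hat n E j)^2 + (z - mu_hat n E j)^2 / (real n + 1))"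
proof -
  define mu where "mu = mu_hat n E j"
  define m where "m = mu_z n E j z"
  have N: "real n > 0" using n by simp
  have sum: "(\<Sum>i=1..n. E i j) = real n * mu"
    using N unfolding mu_def mu_hat_def by simp
  have "m = (real n * mu + z) / (real n + 1)"
    unfolding m_def mu_z_def sum by simp
  then have "real n * (mu - m)^2 + (z - m)^2 = real n * (z - mu)^2 / (real n + 1)"
    using N by (simp add: divide_simps) algebra
  then have "(\<Sum>i=1..n. (E i j - m)^2) + (z - m)^2
               = (\<Sum>i=1..n. (E i j - mu)^2) + real n * ((z - mu)^2 / (real n + 1))"
    using sum_power2_diff_shift[of "\<lambda>i. E i j" "{1..n}" mu m] sum by simp
  then have "((\<Sum>i=1..n. (E i j - m)^2) + (z - m)^2) / real n
               = (\<Sum>i=1..n. (E i j - mu)^2) / real n + (z - mu)^2 / (real n + 1)"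
    using N by (simp add: add_divide_distrib)
  moreover have "(sigma_hat n E j)^2 = (\<Sum>i=1..n. (E i j - mu)^2) / real n"
    unfolding sigma_hat_def mu_def by (simp add: sum_nonneg)
  ultimately show ?thesis
    unfolding sigma_z_def m_def[symmetric] mu_def[symmetric] by simp
qed

lemma score_eq_profile:
  assumes n: "n \<ge> 1"
  defines "c \<equiv> 1 / sqrt (real n + 1)"
  shows "score n E j tj z
           = profile (tj - mu_hat n E j) c (sigma_hat n E j) ((z - mu_hat n E j) * c)"
proof -
  define mu where "mu = mu_hat n E j"
  have cc: "c * c = 1 / (real n + 1)" unfolding c_def by simp
  have "real n * mu = (\<Sum>i=1..n. E i j)" unfolding mu_def mu_hat_def using n by simp
  then have "mu_z n E j z = mu + (z - mu) / (real n + 1)"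
    unfolding mu_z_def by (simp add: field_simps)
  also have "\<dots> = mu + (z - mu) * (c * c)" by (simp add: cc)
  also have "(z - mu) * (c * c) = c * ((z - mu) * c)" by (simp only: mult_ac)
  finally have "mu_z n E j z = mu + c * ((z - mu) * c)" .
  moreover have "((z - mu) * c)^2 = (z - mu)^2 / (real n + 1)"
    unfolding power_mult_distrib power2_eq_square[of c] cc by simp
  ultimately show ?thesis
    unfolding score_def profile_def sigma_z_eq_sigma_hat[OF n] mu_def by (simp add: algebra_simps)
qed

lemma z_star_eq_profile_critical:
  assumes "c > 0"
  shows "(z_star n E j tj - mu_hat n E j) * c
           = profile_critical (tj - mu_hat n E j) c (sigma_hat n E j) ((0 - mu_hat n E j) * c)"
proof -
  define mu s where "mu = mu_hat n E j" and "s = sigma_hat n E j"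
  define a where "a = tj - mu"
  have "(tj \<noteq> mu) = (a \<noteq> 0)" unfolding a_def by simp
  moreover have "-c*s^2/a = (mu - s^2/a - mu) * c" by (simp add: algebra_simps)
  moreover have "(-mu*c \<le> -c*s^2/a) \<longleftrightarrow> s^2/a \<le> mu" using assms
    by (simp add: algebra_simps mult_le_cancel_left_pos flip: times_divide_eq_right)
  ultimately show ?thesis
    unfolding profile_critical_def z_star_def mu_def[symmetric] s_def[symmetric] a_def[symmetric]
    by auto
qed

lemma SUP_score:
  assumes n: "n \<ge> 1" and s: "sigma_hat n E j > 0"
  shows "(SUP z\<in>{0::real..}. score n E j tj z) =
    max (score n E j tj 0) (max (score n E j tj (z_star n E j tj)) (- 1 / sqrt (real n + 1)))"
proof -
  define c where "c = 1 / sqrt (real n + 1)"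
  define mu where "mu = mu_hat n E j"
  have c: "c > 0" unfolding c_def by simp
  have "(SUP z\<in>{0..}. score n E j tj z)
          = (SUP u\<in>(\<lambda>z. (z - mu) * c) ` {0..}. profile (tj - mu) c (sigma_hat n E j) u)"
    unfolding score_eq_profile[OF n] c_def[symmetric] mu_def image_image ..
  also have "\<dots> = max (score n E j tj 0) (max (score n E j tj (z_star n E j tj)) (-c))"
    unfolding image_affine_atLeast[OF c] SUP_profile[OF s c] score_eq_profile[OF n]
      z_star_eq_profile_critical[OF c] c_def[symmetric] mu_def ..
  finally show ?thesis unfolding c_def by simp
qed

theorem lemma3p3:
  fixes n d :: nat and E :: "nat \<Rightarrow> nat \<Rightarrow> real" and t :: "nat \<Rightarrow> real"
  assumes "n \<ge> 2" and "d \<ge> 1"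
    and "\<forall>i\<in>{1..n}. \<forall>j\<in>{1..d}. E i j \<ge> 0"
    and "\<forall>j\<in>{1..d}. sigma_hat n E j > 0"
    and "\<forall>j\<in>{1..d}. t j \<ge> 0"
  shows "Phi_gwc n d E t =
    Max ((\<lambda>j. max (score n E j (t j) 0)
                  (max (score n E j (t j) (z_star n E j (t j))) (- 1 / sqrt (real n + 1)))) ` {1..d})"
proof -
  have "\<And>j. j \<in> {1..d} \<Longrightarrow> (SUP z\<in>{0..}. score n E j (t j) z) =
          max (score n E j (t j) 0) (max (score n E j (t j) (z_star n E j (t j))) (- 1 / sqrt (real n + 1)))"
    using assms(1,4) by (simp add: SUP_score)
  then show ?thesis
    unfolding Phi_gwc_def by (auto intro!: arg_cong[where f = Max] image_cong)
qed

end
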